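(* Let $Z$ be an $\omega$-saturated $Z$-group, $G$ a definable group, and $f:(\bigcap_{n\ge1}nZ)^r\to G$ a type-definable group morphism. Let $\Sigma$ and $X\subseteq S^r(\emptyset)$ be as defined below. Suppose there exist a finite tuple $t$ from $Z$ and a type $p\in X$ with $p\vdash x\in(\bigcap_nnZ)^r$ such that $f$ is injective on the set of realizations of $p\cup\Sigma_t$. Then $f$ is injective.
   Context: A $Z$-group is a model of the complete theory of $(\mathbb{Z},+,<)$. $\Sigma(x,y)$, with $x\in Z^r$, $y\in Z$, is the partial type over $\emptyset$ with $(a,b)\models\Sigma$ iff for every nonzero $m\in\mathbb{Z}^r$ and every $k\in\mathbb{Z}_{>0}$, $k\max(|b|,1)<|m_1a_1+\dots+m_ra_r|$. For a finite tuple $b=(b_1,\dots,b_l)$, $\Sigma_b(x)=\bigcup_i\Sigma(x,b_i)$. $X\subseteq S^r(\emptyset)$ is the set of complete types $p$ over $\emptyset$ such that for every finite tuple $t$ there is $a\models p\cup\Sigma_t$. $\bigcap_nnZ$ is the (type-definable) subgroup of divisible elements. *)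

theory Defs
  imports Main "HOL-Algebra.Group"
begin

section \<open>First-order formulas in the language {+,<} (de Bruijn variables)\<close>

datatype tm = V nat | Pl tm tm

datatype fm = Eq tm tm | Lt tm tm | Neg fm | Conj fm fm | Ex fm

fun teval :: "('a \<Rightarrow> 'a \<Rightarrow> 'a) \<Rightarrow> (nat \<Rightarrow> 'a) \<Rightarrow> tm \<Rightarrow> 'a" where
  "teval ad e (V i) = e i"
| "teval ad e (Pl s t) = ad (teval ad e s) (teval ad e t)"

fun sat :: "('a \<Rightarrow> 'a \<Rightarrow> 'a) \<Rightarrow> ('a \<Rightarrow> 'a \<Rightarrow> bool) \<Rightarrow> (nat \<Rightarrow> 'a) \<Rightarrow> fm \<Rightarrow> bool" where
  "sat ad lt e (Eq s t) = (teval ad e s = teval ad e t)"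
| "sat ad lt e (Lt s t) = lt (teval ad e s) (teval ad e t)"
| "sat ad lt e (Neg \<phi>) = (\<not> sat ad lt e \<phi>)"
| "sat ad lt e (Conj \<phi> \<psi>) = (sat ad lt e \<phi> \<and> sat ad lt e \<psi>)"
| "sat ad lt e (Ex \<phi>) = (\<exists>x. sat ad lt (case_nat x e) \<phi>)"

fun tclosed :: "nat \<Rightarrow> tm \<Rightarrow> bool" where
  "tclosed n (V i) = (i < n)"
| "tclosed n (Pl s t) = (tclosed n s \<and> tclosed n t)"

fun closedn :: "nat \<Rightarrow> fm \<Rightarrow> bool" where
  "closedn n (Eq s t) = (tclosed n s \<and> tclosed n t)"
| "closedn n (Lt s t) = (tclosed n s \<and> tclosed n t)"
| "closedn n (Neg \<phi>) = closedn n \<phi>"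
| "closedn n (Conj \<phi> \<psi>) = (closedn n \<phi> \<and> closedn n \<psi>)"
| "closedn n (Ex \<phi>) = closedn (Suc n) \<phi>"

definition zsat :: "'z::linordered_ab_group_add list \<Rightarrow> fm \<Rightarrow> bool" where
  "zsat l \<phi> = sat (+) (<) (\<lambda>i. l ! i) \<phi>"

text \<open>'z is a model of the complete theory of (Z,+,<): it satisfies the same sentences.\<close>
definition Zgroup :: "'z::linordered_ab_group_add itself \<Rightarrow> bool" where
  "Zgroup _ = (\<forall>\<phi>. closedn 0 \<phi> \<longrightarrow>
      (sat ((+)::'z\<Rightarrow>'z\<Rightarrow>'z) (<) (\<lambda>_. 0) \<phi> \<longleftrightarrow> sat ((+)::int\<Rightarrow>int\<Rightarrow>int) (<) (\<lambda>_. 0) \<phi>))"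

definition omega_saturated :: "'z::linordered_ab_group_add itself \<Rightarrow> bool" where
  "omega_saturated _ = (\<forall>(ps::'z list) \<Phi>. (\<forall>\<phi>\<in>\<Phi>. closedn (Suc (length ps)) \<phi>) \<longrightarrow>
      (\<forall>F. finite F \<longrightarrow> F \<subseteq> \<Phi> \<longrightarrow> (\<exists>a. \<forall>\<phi>\<in>F. zsat (a # ps) \<phi>)) \<longrightarrow>
      (\<exists>a. \<forall>\<phi>\<in>\<Phi>. zsat (a # ps) \<phi>))"

definition definable :: "nat \<Rightarrow> 'z::linordered_ab_group_add list set \<Rightarrow> bool" where
  "definable k S = (\<exists>\<phi> (ps::'z list). closedn (k + length ps) \<phi> \<and>
      S = {v. length v = k \<and> zsat (v @ ps) \<phi>})"

definition type_definable :: "nat \<Rightarrow> 'z::linordered_ab_group_add list set \<Rightarrow> bool" where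
  "type_definable k S = (\<exists>\<F>. (\<forall>D\<in>\<F>. definable k D) \<and>
      S = {v. length v = k} \<inter> \<Inter>\<F>)"

definition definable_group :: "nat \<Rightarrow> ('z::linordered_ab_group_add list) monoid \<Rightarrow> bool" where
  "definable_group k G = (group G \<and> definable k (carrier G) \<and>
      definable (3 * k) {x @ y @ z | x y z. x \<in> carrier G \<and> y \<in> carrier G \<and> z = x \<otimes>\<^bsub>G\<^esub> y})"

definition zmul :: "int \<Rightarrow> 'z::linordered_ab_group_add \<Rightarrow> 'z" where
  "zmul k x = (if 0 \<le> k then (\<Sum>_<nat k. x) else - (\<Sum>_<nat (-k). x))"

definition zone :: "'z::linordered_ab_group_add" where
  "zone = (THE u. 0 < u \<and> (\<forall>y. 0 < y \<longrightarrow> u \<le> y))"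

definition divisibles :: "'z::linordered_ab_group_add set" where
  "divisibles = {x. \<forall>n::int. n \<ge> 1 \<longrightarrow> (\<exists>y. zmul n y = x)}"

definition divisibles_pow :: "nat \<Rightarrow> 'z::linordered_ab_group_add list set" where
  "divisibles_pow r = {a. length a = r \<and> set a \<subseteq> divisibles}"

definition lincomb :: "int list \<Rightarrow> 'z::linordered_ab_group_add list \<Rightarrow> 'z" where
  "lincomb m a = (\<Sum>i<length a. zmul (m ! i) (a ! i))"

definition zabs :: "'z::linordered_ab_group_add \<Rightarrow> 'z" where
  "zabs x = max x (- x)"

definition Sigma_rel :: "'z::linordered_ab_group_add list \<Rightarrow> 'z \<Rightarrow> bool" where
  "Sigma_rel a b = (\<forall>m k. length m = length a \<longrightarrow> m \<noteq> replicate (length a) 0 \<longrightarrow> k > 0 \<longrightarrow>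
      zmul k (max (zabs b) zone) < zabs (lincomb m a))"

definition Sigma_t :: "'z::linordered_ab_group_add list \<Rightarrow> 'z list \<Rightarrow> bool" where
  "Sigma_t t a = (\<forall>b\<in>set t. Sigma_rel a b)"

definition complete_type :: "'z::linordered_ab_group_add itself \<Rightarrow> nat \<Rightarrow> fm set \<Rightarrow> bool" where
  "complete_type _ r p = ((\<forall>\<phi>\<in>p. closedn r \<phi>) \<and>
      (\<forall>F. finite F \<longrightarrow> F \<subseteq> p \<longrightarrow> (\<exists>a::'z list. length a = r \<and> (\<forall>\<phi>\<in>F. zsat a \<phi>))) \<and>
      (\<forall>\<phi>. closedn r \<phi> \<longrightarrow> \<phi> \<in> p \<or> Neg \<phi> \<in> p))"

definition realizations :: "nat \<Rightarrow> fm set \<Rightarrow> 'z::linordered_ab_group_add list set" where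
  "realizations r p = {a. length a = r \<and> (\<forall>\<phi>\<in>p. zsat a \<phi>)}"

definition Xset :: "'z::linordered_ab_group_add itself \<Rightarrow> nat \<Rightarrow> fm set set" where
  "Xset T r = {p. complete_type T r p \<and>
      (\<forall>t::'z list. \<exists>a. a \<in> realizations r p \<and> Sigma_t t a)}"

end

theory Submission
  imports Defs
begin

text \<open>
  Let \<open>d = x - y\<close> lie in the kernel of \<open>f\<close> and let \<open>s = \<Sum>|d\<^sub>i|\<close>. Choose \<open>c\<close> realizing
  \<open>p \<union> \<Sigma>\<^sub>t\<close> together with \<open>\<Sigma>(x, s)\<close> and \<open>\<Sigma>(x, |b| + 1 + s)\<close> for \<open>b \<in> t\<close>. Because \<open>d\<close> is
  divisible and small compared with every nontrivial linear combination of \<open>c\<close>, the tuples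
  \<open>c\<close> and \<open>c + d\<close> are connected by a back-and-forth system: extend a pair \<open>(e, e')\<close> by
  \<open>x \<mapsto> x + dx\<close>, where \<open>dx\<close> is obtained by dividing a divisible element whenever \<open>x\<close> satisfies
  a linear relation with \<open>e\<close> modulo the convex subgroup generated by \<open>s\<close>, and by \<open>x \<mapsto> x\<close>
  otherwise. Hence \<open>c + d\<close> also realizes \<open>p\<close>, and it still realizes \<open>\<Sigma>\<^sub>t\<close>. As
  \<open>f (c + d) = f c\<close>, injectivity on \<open>p \<union> \<Sigma>\<^sub>t\<close> forces \<open>d = 0\<close>.
  The argument works in every ordered abelian group.
\<close>

lemma zmul_plus_one: "zmul (k + 1) x = zmul k x + (x::'z::linordered_ab_group_add)"
proof (cases "k \<ge> 0")
  case True
  then have "nat (k + 1) = Suc (nat k)" by simp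
  then show ?thesis using True by (simp add: zmul_def add.commute)
next
  case False
  show ?thesis
  proof (cases "k = -1")
    case True then show ?thesis by (simp add: zmul_def)
  next
    case False
    with \<open>\<not> k \<ge> 0\<close> have "\<not> 0 \<le> k + 1" "nat (-k) = Suc (nat (-(k + 1)))" by simp_all
    then show ?thesis using \<open>\<not> k \<ge> 0\<close> by (simp add: zmul_def algebra_simps)
  qed
qed

lemma zmul_zero_left [simp]: "zmul 0 x = (0::'z::linordered_ab_group_add)"
  by (simp add: zmul_def)

lemma zmul_one [simp]: "zmul 1 x = (x::'z::linordered_ab_group_add)"
  using zmul_plus_one[of 0 x] by simp

lemma zmul_minus_one: "zmul (k - 1) x = zmul k x - (x::'z::linordered_ab_group_add)"
  using zmul_plus_one[of "k - 1" x] by (simp add: algebra_simps)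

lemma zmul_left_distrib: "zmul (a + b) x = zmul a x + zmul b (x::'z::linordered_ab_group_add)"
proof (induct b rule: int_induct[where k=0])
  case (step1 i)
  have "zmul (a + (i + 1)) x = zmul ((a + i) + 1) x" by (simp add: algebra_simps)
  also have "\<dots> = zmul a x + zmul i x + x" using step1 by (simp only: zmul_plus_one)
  finally show ?case by (simp only: zmul_plus_one add.assoc)
next
  case (step2 i)
  have "zmul (a + (i - 1)) x = zmul ((a + i) - 1) x" by (simp add: algebra_simps)
  also have "\<dots> = zmul a x + zmul i x - x" using step2 by (simp only: zmul_minus_one)
  finally show ?case by (simp only: zmul_minus_one add_diff_eq)
qed simp

lemma zmul_right_distrib: "zmul a (x + y) = zmul a x + zmul a (y::'z::linordered_ab_group_add)"
proof (induct a rule: int_induct[where k=0])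
  case (step1 i) then show ?case by (simp only: zmul_plus_one) (simp add: algebra_simps)
next
  case (step2 i) then show ?case by (simp only: zmul_minus_one) (simp add: algebra_simps)
qed simp

lemma zmul_zero_right [simp]: "zmul a (0::'z::linordered_ab_group_add) = 0"
  using zmul_right_distrib[of a 0 0] by simp

lemma zmul_minus_right: "zmul a (- x) = - zmul a (x::'z::linordered_ab_group_add)"
  using zmul_right_distrib[of a x "- x"] by (simp add: eq_neg_iff_add_eq_0 add.commute)

lemma zmul_minus_left: "zmul (- a) x = - zmul a (x::'z::linordered_ab_group_add)"
  using zmul_left_distrib[of a "- a" x] by (simp add: eq_neg_iff_add_eq_0 add.commute)

lemma zmul_diff_right: "zmul a (x - y) = zmul a x - zmul a (y::'z::linordered_ab_group_add)"
  using zmul_right_distrib[of a x "- y"] zmul_minus_right[of a y] by simp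

lemma zmul_diff_left: "zmul (a - b) x = zmul a x - zmul b (x::'z::linordered_ab_group_add)"
  using zmul_left_distrib[of a "- b" x] zmul_minus_left[of b x] by simp

lemma zmul_zmul: "zmul a (zmul b x) = zmul (a * b) (x::'z::linordered_ab_group_add)"
proof (induct a rule: int_induct[where k=0])
  case (step1 i) then show ?case by (simp add: zmul_plus_one zmul_left_distrib distrib_right)
next
  case (step2 i) then show ?case by (simp add: zmul_minus_one zmul_diff_left left_diff_distrib)
qed simp

lemma zmul_nonneg: "0 \<le> a \<Longrightarrow> 0 \<le> x \<Longrightarrow> 0 \<le> zmul a (x::'z::linordered_ab_group_add)"
  by (induct a rule: int_ge_induct[where k=0]) (simp_all add: zmul_plus_one)

lemma zmul_pos: "0 < a \<Longrightarrow> 0 < x \<Longrightarrow> 0 < zmul a (x::'z::linordered_ab_group_add)"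
proof -
  assume "0 < a" "0 < x"
  then have "1 \<le> a" by simp
  then show ?thesis
    by (induct a rule: int_ge_induct) (simp_all add: zmul_plus_one add_pos_pos \<open>0 < x\<close>)
qed

lemma zmul_mono: "0 \<le> a \<Longrightarrow> x \<le> y \<Longrightarrow> zmul a x \<le> zmul a (y::'z::linordered_ab_group_add)"
  using zmul_nonneg[of a "y - x"] by (simp add: zmul_diff_right)

lemma zmul_strict_mono: "0 < a \<Longrightarrow> x < y \<Longrightarrow> zmul a x < zmul a (y::'z::linordered_ab_group_add)"
  using zmul_pos[of a "y - x"] by (simp add: zmul_diff_right)

lemma zmul_mono_coeff: "a \<le> b \<Longrightarrow> 0 \<le> x \<Longrightarrow> zmul a x \<le> zmul b (x::'z::linordered_ab_group_add)"
  using zmul_nonneg[of "b - a" x] by (simp add: zmul_diff_left)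

lemma zmul_cancel: "a \<noteq> 0 \<Longrightarrow> zmul a x = zmul a y \<Longrightarrow> x = (y::'z::linordered_ab_group_add)"
proof -
  assume a: "a \<noteq> 0" and "zmul a x = zmul a y"
  then have "zmul \<bar>a\<bar> x = zmul \<bar>a\<bar> y"
    by (cases "a \<ge> 0") (auto simp: zmul_minus_left)
  moreover have "0 < \<bar>a\<bar>" using a by simp
  ultimately show ?thesis
    by (metis linorder_neqE order_less_irrefl zmul_strict_mono)
qed

lemma zmul_eq_0_iff: "a \<noteq> 0 \<Longrightarrow> zmul a x = 0 \<longleftrightarrow> x = (0::'z::linordered_ab_group_add)"
  using zmul_cancel[of a x 0] by auto

lemma zmul_sum_right:
  "zmul a (\<Sum>i<(n::nat). f i) = (\<Sum>i<n. zmul a (f i :: 'z::linordered_ab_group_add))"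
  by (induct n) (simp_all add: zmul_right_distrib)

lemma zmul_sum_left:
  "zmul (\<Sum>i<(n::nat). a i) x = (\<Sum>i<n. zmul (a i) (x::'z::linordered_ab_group_add))"
  by (induct n) (simp_all add: zmul_left_distrib)

lemma zabs_nonneg: "0 \<le> zabs (x::'z::linordered_ab_group_add)"
  by (simp add: zabs_def le_max_iff_disj) (meson linorder_le_cases neg_0_le_iff_le)

lemma zabs_ge_self: "x \<le> zabs (x::'z::linordered_ab_group_add)"
  by (simp add: zabs_def)

lemma zabs_ge_minus_self: "- x \<le> zabs (x::'z::linordered_ab_group_add)"
  by (simp add: zabs_def)

lemma zabs_minus [simp]: "zabs (- x) = zabs (x::'z::linordered_ab_group_add)"
  by (simp add: zabs_def max.commute)

lemma zabs_of_nonneg: "0 \<le> x \<Longrightarrow> zabs x = (x::'z::linordered_ab_group_add)"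
  by (simp add: zabs_def)

lemma zabs_triangle_ineq: "zabs (x + y) \<le> zabs x + zabs (y::'z::linordered_ab_group_add)"
proof -
  have "x + y \<le> zabs x + zabs y" by (intro add_mono zabs_ge_self)
  moreover have "- (x + y) \<le> zabs x + zabs y"
    using add_mono[OF zabs_ge_minus_self[of x] zabs_ge_minus_self[of y]] by (simp add: add.commute)
  ultimately show ?thesis by (simp add: zabs_def)
qed

lemma zabs_zmul: "zabs (zmul a x) = zmul \<bar>a\<bar> (zabs (x::'z::linordered_ab_group_add))"
proof -
  have nonneg: "zabs (zmul a x) = zmul a (zabs x)" if "0 \<le> a" for a
  proof (cases "0 \<le> x")
    case True then show ?thesis using that by (simp add: zmul_nonneg zabs_of_nonneg)
  next
    case False
    then have "zabs x = - x" by (simp add: zabs_def)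
    moreover have "0 \<le> zmul a (- x)" using False that by (simp add: zmul_nonneg)
    ultimately show ?thesis by (metis zabs_minus zabs_of_nonneg zmul_minus_right)
  qed
  show ?thesis
    using nonneg[of a] nonneg[of "- a"] by (cases "0 \<le> a") (simp_all add: zmul_minus_left)
qed

lemma zabs_sum_le: "zabs (\<Sum>i<(n::nat). f i) \<le> (\<Sum>i<n. zabs (f i :: 'z::linordered_ab_group_add))"
proof (induct n)
  case 0 then show ?case by (simp add: zabs_def)
next
  case (Suc n)
  then show ?case
    using zabs_triangle_ineq[of "\<Sum>i<n. f i" "f n"] by (simp add: add_mono order_trans)
qed

lemma zabs_le_sum_zabs:
  fixes e :: "nat \<Rightarrow> 'z::linordered_ab_group_add"
  assumes "i < n"
  shows "zabs (e i) \<le> (\<Sum>j<n. zabs (e j))"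
proof -
  have "(\<Sum>j<n. zabs (e j)) = zabs (e i) + (\<Sum>j\<in>{..<n} - {i}. zabs (e j))"
    using assms by (intro sum.remove) auto
  moreover have "0 \<le> (\<Sum>j\<in>{..<n} - {i}. zabs (e j))" by (intro sum_nonneg zabs_nonneg)
  ultimately show ?thesis by simp
qed

definition linear_comb :: "(nat \<Rightarrow> int) \<Rightarrow> (nat \<Rightarrow> 'z::linordered_ab_group_add) \<Rightarrow> nat \<Rightarrow> 'z" where
  "linear_comb m e n = (\<Sum>i<n. zmul (m i) (e i))"

lemma lincomb_eq_linear_comb: "lincomb m a = linear_comb (\<lambda>i. m ! i) (\<lambda>i. a ! i) (length a)"
  by (simp add: lincomb_def linear_comb_def)

lemma linear_comb_cong:
  "(\<And>i. i < n \<Longrightarrow> m i = m' i) \<Longrightarrow> (\<And>i. i < n \<Longrightarrow> e i = e' i) \<Longrightarrow>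
    linear_comb m e n = linear_comb m' e' n"
  by (simp add: linear_comb_def)

lemma linear_comb_add_coeffs:
  "linear_comb (\<lambda>i. m i + m' i) e n = linear_comb m e n + linear_comb m' e n"
  by (simp add: linear_comb_def zmul_left_distrib sum.distrib)

lemma linear_comb_diff_coeffs:
  "linear_comb (\<lambda>i. m i - m' i) e n = linear_comb m e n - linear_comb m' e n"
  by (simp add: linear_comb_def zmul_diff_left sum_subtractf)

lemma linear_comb_scale_coeffs: "linear_comb (\<lambda>i. a * m i) e n = zmul a (linear_comb m e n)"
  by (simp add: linear_comb_def zmul_zmul zmul_sum_right)

lemma linear_comb_add: "linear_comb m (\<lambda>i. e i + e' i) n = linear_comb m e n + linear_comb m e' n"
  by (simp add: linear_comb_def zmul_right_distrib sum.distrib)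

lemma linear_comb_diff: "linear_comb m (\<lambda>i. e i - e' i) n = linear_comb m e n - linear_comb m e' n"
  by (simp add: linear_comb_def zmul_diff_right sum_subtractf)

lemma linear_comb_Suc_case_nat:
  "linear_comb m (case_nat x e) (Suc n) = zmul (m 0) x + linear_comb (\<lambda>i. m (Suc i)) e n"
  unfolding linear_comb_def by (subst sum.lessThan_Suc_shift) simp

lemma linear_comb_closed:
  assumes "P 0" "\<And>x y. P x \<Longrightarrow> P y \<Longrightarrow> P (x + y)" "\<And>a x. P x \<Longrightarrow> P (zmul a x)"
    and "\<forall>i<n. P (e i)"
  shows "P (linear_comb m e n)"
  using assms(4) unfolding linear_comb_def by (induct n) (simp_all add: assms(1-3))

lemma zabs_linear_comb_le:
  fixes e :: "nat \<Rightarrow> 'z::linordered_ab_group_add"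
  assumes "\<forall>i<n. zabs (e i) \<le> s"
  shows "zabs (linear_comb m e n) \<le> zmul (\<Sum>i<n. \<bar>m i\<bar>) s"
proof -
  have "zabs (linear_comb m e n) \<le> (\<Sum>i<n. zabs (zmul (m i) (e i)))"
    unfolding linear_comb_def by (rule zabs_sum_le)
  also have "\<dots> = (\<Sum>i<n. zmul \<bar>m i\<bar> (zabs (e i)))" by (simp add: zabs_zmul)
  also have "\<dots> \<le> (\<Sum>i<n. zmul \<bar>m i\<bar> s)" using assms by (intro sum_mono zmul_mono) auto
  also have "\<dots> = zmul (\<Sum>i<n. \<bar>m i\<bar>) s" by (rule zmul_sum_left[symmetric])
  finally show ?thesis .
qed

definition convex_hull_subgroup :: "'z::linordered_ab_group_add \<Rightarrow> 'z set" where
  "convex_hull_subgroup s = {y. \<exists>k::nat. zabs y \<le> zmul (int k) s}"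

lemma convex_hull_subgroup_zero: "0 \<in> convex_hull_subgroup s"
  unfolding convex_hull_subgroup_def by (auto intro: exI[of _ 0] simp: zabs_def)

lemma convex_hull_subgroup_add:
  assumes s: "0 \<le> s" and "x \<in> convex_hull_subgroup s" "y \<in> convex_hull_subgroup s"
  shows "x + y \<in> convex_hull_subgroup s"
proof -
  obtain k1 k2 where k: "zabs x \<le> zmul (int k1) s" "zabs y \<le> zmul (int k2) s"
    using assms unfolding convex_hull_subgroup_def by blast
  have "zabs (x + y) \<le> zabs x + zabs y" by (rule zabs_triangle_ineq)
  also have "\<dots> \<le> zmul (int k1) s + zmul (int k2) s" using k by (rule add_mono)
  also have "\<dots> = zmul (int (k1 + k2)) s" by (simp add: zmul_left_distrib)
  finally show ?thesis unfolding convex_hull_subgroup_def by blast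
qed

lemma convex_hull_subgroup_zmul:
  assumes s: "0 \<le> s" and "x \<in> convex_hull_subgroup s"
  shows "zmul a x \<in> convex_hull_subgroup s"
proof -
  obtain k where k: "zabs x \<le> zmul (int k) s"
    using assms unfolding convex_hull_subgroup_def by blast
  have "zabs (zmul a x) = zmul \<bar>a\<bar> (zabs x)" by (rule zabs_zmul)
  also have "\<dots> \<le> zmul \<bar>a\<bar> (zmul (int k) s)" using k by (intro zmul_mono) auto
  also have "\<dots> = zmul (int (nat \<bar>a\<bar> * k)) s" by (simp add: zmul_zmul)
  finally show ?thesis unfolding convex_hull_subgroup_def by blast
qed

lemma convex_hull_subgroup_uminus:
  "0 \<le> s \<Longrightarrow> x \<in> convex_hull_subgroup s \<Longrightarrow> - x \<in> convex_hull_subgroup s"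
  using convex_hull_subgroup_zmul[of s x "-1"] by (simp add: zmul_minus_left)

lemma convex_hull_subgroup_diff:
  "0 \<le> s \<Longrightarrow> x \<in> convex_hull_subgroup s \<Longrightarrow> y \<in> convex_hull_subgroup s \<Longrightarrow>
    x - y \<in> convex_hull_subgroup s"
  using convex_hull_subgroup_add[of s x "- y"] convex_hull_subgroup_uminus[of s y] by simp

lemma linear_comb_in_convex_hull_subgroup:
  "0 \<le> s \<Longrightarrow> \<forall>i<n. e i \<in> convex_hull_subgroup s \<Longrightarrow> linear_comb m e n \<in> convex_hull_subgroup s"
  by (rule linear_comb_closed)
    (auto intro: convex_hull_subgroup_zero convex_hull_subgroup_add convex_hull_subgroup_zmul)

lemma convex_hull_subgroup_zmul_cancel:
  assumes "j \<noteq> 0" and "zmul j y \<in> convex_hull_subgroup s"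
  shows "y \<in> convex_hull_subgroup s"
proof -
  obtain k where k: "zabs (zmul j y) \<le> zmul (int k) s"
    using assms unfolding convex_hull_subgroup_def by blast
  have "zabs y = zmul 1 (zabs y)" by simp
  also have "\<dots> \<le> zmul \<bar>j\<bar> (zabs y)" using assms by (intro zmul_mono_coeff zabs_nonneg) simp
  also have "\<dots> = zabs (zmul j y)" by (simp add: zabs_zmul)
  finally show ?thesis using k unfolding convex_hull_subgroup_def by (blast intro: order_trans)
qed

lemma zero_in_divisibles: "0 \<in> divisibles"
  unfolding divisibles_def by (auto intro: exI[of _ 0])

lemma divisibles_add:
  assumes "x \<in> divisibles" "y \<in> divisibles"
  shows "x + y \<in> divisibles"
  unfolding divisibles_def
proof (intro CollectI allI impI)
  fix n :: int assume "n \<ge> 1"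
  then obtain u v where "zmul n u = x" "zmul n v = y" using assms unfolding divisibles_def by blast
  then have "zmul n (u + v) = x + y" by (simp add: zmul_right_distrib)
  then show "\<exists>w. zmul n w = x + y" by blast
qed

lemma divisibles_zmul:
  assumes "x \<in> divisibles"
  shows "zmul a x \<in> divisibles"
  unfolding divisibles_def
proof (intro CollectI allI impI)
  fix n :: int assume "n \<ge> 1"
  then obtain y where "zmul n y = x" using assms unfolding divisibles_def by blast
  then have "zmul n (zmul a y) = zmul a x" by (metis mult.commute zmul_zmul)
  then show "\<exists>y. zmul n y = zmul a x" by blast
qed

lemma divisibles_uminus: "x \<in> divisibles \<Longrightarrow> - x \<in> divisibles"
  using divisibles_zmul[of x "-1"] by (simp add: zmul_minus_left)

lemma divisibles_diff: "x \<in> divisibles \<Longrightarrow> y \<in> divisibles \<Longrightarrow> x - y \<in> divisibles"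
  using divisibles_add[of x "- y"] divisibles_uminus[of y] by simp

lemma linear_comb_in_divisibles: "\<forall>i<n. e i \<in> divisibles \<Longrightarrow> linear_comb m e n \<in> divisibles"
  by (rule linear_comb_closed) (auto intro: zero_in_divisibles divisibles_add divisibles_zmul)

text \<open>The quotient can be chosen divisible again: divide by \<open>|n| k\<close> instead of \<open>|n|\<close>.\<close>

lemma divisibles_divide:
  assumes x: "x \<in> divisibles" and n: "n \<noteq> 0"
  obtains y where "y \<in> divisibles" "zmul n y = x"
proof -
  have n1: "\<bar>n\<bar> \<ge> 1" using n by simp
  then obtain y where y: "zmul \<bar>n\<bar> y = x" using x unfolding divisibles_def by blast
  have yD: "y \<in> divisibles" unfolding divisibles_def
  proof (intro CollectI allI impI)
    fix k :: int assume k: "k \<ge> 1"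
    have "\<bar>n\<bar> * k \<ge> 1" using mult_mono[of 1 "\<bar>n\<bar>" 1 k] n1 k by simp
    then obtain z where "zmul (\<bar>n\<bar> * k) z = x" using x unfolding divisibles_def by blast
    then have "zmul \<bar>n\<bar> (zmul k z) = zmul \<bar>n\<bar> y" using y by (simp add: zmul_zmul)
    then have "zmul k z = y" by (rule zmul_cancel[rotated]) (use n in simp)
    then show "\<exists>z. zmul k z = y" by blast
  qed
  show ?thesis
  proof (cases "n \<ge> 0")
    case True
    then show ?thesis using that yD y by simp
  next
    case False
    then have "zmul n (- y) = x" using y by (simp add: zmul_minus_right zmul_minus_left[symmetric])
    then show ?thesis using that divisibles_uminus[OF yD] by blast
  qed
qed

subsection \<open>A back-and-forth system\<close>

fun tm_coeff :: "tm \<Rightarrow> nat \<Rightarrow> int" where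
  "tm_coeff (V i) = (\<lambda>j. if j = i then 1 else 0)"
| "tm_coeff (Pl s t) = (\<lambda>j. tm_coeff s j + tm_coeff t j)"

lemma teval_eq_linear_comb:
  "tclosed n t \<Longrightarrow> teval (+) e t = linear_comb (tm_coeff t) (e::nat \<Rightarrow> 'z::linordered_ab_group_add) n"
proof (induct t)
  case (V i)
  have "linear_comb (tm_coeff (V i)) e n = (\<Sum>j<n. if j = i then e j else 0)"
    unfolding linear_comb_def by (intro sum.cong) auto
  then show ?case using V by (simp add: sum.delta)
next
  case (Pl s t) then show ?case by (simp add: linear_comb_add_coeffs)
qed

definition small_shift :: "'z::linordered_ab_group_add \<Rightarrow> nat \<Rightarrow> (nat \<Rightarrow> 'z) \<Rightarrow> (nat \<Rightarrow> 'z) \<Rightarrow> bool" where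
  "small_shift s n e e' \<longleftrightarrow>
     (\<forall>i<n. e' i - e i \<in> divisibles \<inter> convex_hull_subgroup s) \<and>
     (\<forall>m. linear_comb m e n \<in> convex_hull_subgroup s \<longrightarrow> linear_comb m (\<lambda>i. e' i - e i) n = 0)"

lemma small_shiftI:
  assumes "\<And>i. i < n \<Longrightarrow> e' i - e i = d i"
    and "\<And>i. i < n \<Longrightarrow> d i \<in> divisibles \<inter> convex_hull_subgroup s"
    and "\<And>m. linear_comb m e n \<in> convex_hull_subgroup s \<Longrightarrow> linear_comb m d n = 0"
  shows "small_shift s n e e'"
proof -
  have "linear_comb m (\<lambda>i. e' i - e i) n = linear_comb m d n" for m
    using assms(1) by (intro linear_comb_cong) auto
  then show ?thesis unfolding small_shift_def using assms by auto
qed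

lemma sign_add_dominated:
  fixes a b :: "'z::linordered_ab_group_add"
  assumes "zabs b < zabs a"
  shows "(a + b = 0 \<longleftrightarrow> a = 0) \<and> (a + b < 0 \<longleftrightarrow> a < 0)"
proof (cases "0 \<le> a")
  case True
  then have "zabs a = a" by (rule zabs_of_nonneg)
  then have "- b < a" "0 < a" using assms zabs_ge_minus_self[of b] zabs_nonneg[of b] by simp_all
  then have "0 < a + b" using add_strict_right_mono[of "- b" a b] by simp
  then show ?thesis using \<open>0 < a\<close> by auto
next
  case False
  then have "zabs a = - a" by (simp add: zabs_def)
  then have "b < - a" using assms zabs_ge_self[of b] by simp
  then have "a + b < 0" using add_strict_left_mono[of b "- a" a] by simp
  then show ?thesis using False by auto
qed

lemma small_shift_linear_comb_sign:
  assumes R: "small_shift s n e e'" and s: "0 \<le> s"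
  shows "(linear_comb m e' n = 0 \<longleftrightarrow> linear_comb m e n = 0) \<and>
         (linear_comb m e' n < 0 \<longleftrightarrow> linear_comb m e n < 0)"
proof -
  define d where "d = (\<lambda>i. e' i - e i)"
  have e': "linear_comb m e' n = linear_comb m e n + linear_comb m d n"
    using linear_comb_add[of m e d n] by (simp add: d_def)
  show ?thesis
  proof (cases "linear_comb m e n \<in> convex_hull_subgroup s")
    case True
    then have "linear_comb m d n = 0" using R unfolding small_shift_def d_def by blast
    then show ?thesis using e' by simp
  next
    case False
    have "linear_comb m d n \<in> convex_hull_subgroup s"
      using R s unfolding small_shift_def d_def by (intro linear_comb_in_convex_hull_subgroup) auto
    then obtain k where "zabs (linear_comb m d n) \<le> zmul (int k) s"
      unfolding convex_hull_subgroup_def by blast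
    moreover have "\<not> zabs (linear_comb m e n) \<le> zmul (int k) s"
      using False unfolding convex_hull_subgroup_def by blast
    ultimately have "zabs (linear_comb m d n) < zabs (linear_comb m e n)" by auto
    from sign_add_dominated[OF this] show ?thesis using e' by simp
  qed
qed

lemma small_shift_sym:
  assumes R: "small_shift s n e e'" and s: "0 \<le> s"
  shows "small_shift s n e' e"
proof (rule small_shiftI)
  let ?d = "\<lambda>i. e' i - e i"
  show "e i - e' i = - ?d i" for i by simp
  show "- ?d i \<in> divisibles \<inter> convex_hull_subgroup s" if "i < n" for i
    using R that s divisibles_uminus convex_hull_subgroup_uminus unfolding small_shift_def by blast
  fix m assume m: "linear_comb m e' n \<in> convex_hull_subgroup s"
  have "linear_comb m ?d n \<in> convex_hull_subgroup s"
    using R s unfolding small_shift_def by (intro linear_comb_in_convex_hull_subgroup) auto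
  then have "linear_comb m e' n - linear_comb m ?d n \<in> convex_hull_subgroup s"
    using convex_hull_subgroup_diff[OF s m] by blast
  then have "linear_comb m e n \<in> convex_hull_subgroup s" by (simp add: linear_comb_diff)
  then have "linear_comb m ?d n = 0" using R unfolding small_shift_def by blast
  then show "linear_comb m (\<lambda>i. - ?d i) n = 0"
    using linear_comb_diff[of m "\<lambda>_. 0" ?d n] by (simp add: linear_comb_def)
qed

lemma small_shift_extend_dependent:
  assumes R: "small_shift s n e e'" and s: "0 \<le> s"
    and j: "j \<noteq> 0" and u: "zmul j x + linear_comb m e n \<in> convex_hull_subgroup s"
  shows "\<exists>x'. small_shift s (Suc n) (case_nat x e) (case_nat x' e')"
proof -
  define d where "d = (\<lambda>i. e' i - e i)"
  have dD: "\<forall>i<n. d i \<in> divisibles \<inter> convex_hull_subgroup s"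
    and Rm: "\<And>m. linear_comb m e n \<in> convex_hull_subgroup s \<Longrightarrow> linear_comb m d n = 0"
    using R unfolding small_shift_def d_def by auto
  have "- linear_comb m d n \<in> divisibles"
    using dD by (intro divisibles_uminus linear_comb_in_divisibles) auto
  then obtain dx where dxD: "dx \<in> divisibles" and dx: "zmul j dx = - linear_comb m d n"
    using divisibles_divide j by blast
  have "- linear_comb m d n \<in> convex_hull_subgroup s"
    using dD s by (intro convex_hull_subgroup_uminus linear_comb_in_convex_hull_subgroup) auto
  then have dxC: "dx \<in> convex_hull_subgroup s"
    using j dx convex_hull_subgroup_zmul_cancel by metis
  have "small_shift s (Suc n) (case_nat x e) (case_nat (x + dx) e')"
  proof (rule small_shiftI[where d="case_nat dx d"])
    show "case_nat (x + dx) e' i - case_nat x e i = case_nat dx d i" for i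
      by (simp add: d_def split: nat.split)
    show "case_nat dx d i \<in> divisibles \<inter> convex_hull_subgroup s" if "i < Suc n" for i
      using that dD dxD dxC by (auto split: nat.split)
  next
    fix m' assume v: "linear_comb m' (case_nat x e) (Suc n) \<in> convex_hull_subgroup s"
    define a where "a = m' 0"
    define m'' where "m'' = (\<lambda>i. m' (Suc i))"
    have v': "zmul a x + linear_comb m'' e n \<in> convex_hull_subgroup s"
      using v by (simp add: linear_comb_Suc_case_nat a_def m''_def)
    \<comment> \<open>eliminate \<open>x\<close> between the relations \<open>u\<close> and \<open>v'\<close>\<close>
    have "zmul j (zmul a x + linear_comb m'' e n) - zmul a (zmul j x + linear_comb m e n)
          = linear_comb (\<lambda>i. j * m'' i - a * m i) e n"
      by (simp add: linear_comb_diff_coeffs linear_comb_scale_coeffs zmul_right_distrib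
          zmul_zmul mult.commute)
    moreover have "zmul j (zmul a x + linear_comb m'' e n) - zmul a (zmul j x + linear_comb m e n)
          \<in> convex_hull_subgroup s"
      using v' u s by (intro convex_hull_subgroup_diff convex_hull_subgroup_zmul)
    ultimately have "linear_comb (\<lambda>i. j * m'' i - a * m i) d n = 0" using Rm by simp
    then have E: "zmul j (linear_comb m'' d n) = zmul a (linear_comb m d n)"
      by (simp add: linear_comb_diff_coeffs linear_comb_scale_coeffs)
    have "zmul j (zmul a dx + linear_comb m'' d n) = zmul a (zmul j dx) + zmul a (linear_comb m d n)"
      by (simp add: zmul_right_distrib E zmul_zmul mult.commute)
    also have "\<dots> = 0" by (simp add: dx zmul_minus_right)
    finally have "zmul a dx + linear_comb m'' d n = 0" using zmul_eq_0_iff[OF j] by blast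
    then show "linear_comb m' (case_nat dx d) (Suc n) = 0"
      by (simp add: linear_comb_Suc_case_nat a_def m''_def)
  qed
  then show ?thesis by blast
qed

lemma small_shift_extend_independent:
  assumes R: "small_shift s n e e'"
    and indep: "\<And>m j. j \<noteq> 0 \<Longrightarrow> zmul j x + linear_comb m e n \<notin> convex_hull_subgroup s"
  shows "small_shift s (Suc n) (case_nat x e) (case_nat x e')"
proof (rule small_shiftI[where d="case_nat 0 (\<lambda>i. e' i - e i)"])
  show "case_nat x e' i - case_nat x e i = case_nat 0 (\<lambda>i. e' i - e i) i" for i
    by (simp split: nat.split)
  show "case_nat 0 (\<lambda>i. e' i - e i) i \<in> divisibles \<inter> convex_hull_subgroup s" if "i < Suc n" for i
    using that R zero_in_divisibles convex_hull_subgroup_zero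
    unfolding small_shift_def by (auto split: nat.split)
next
  fix m assume "linear_comb m (case_nat x e) (Suc n) \<in> convex_hull_subgroup s"
  then have v: "zmul (m 0) x + linear_comb (\<lambda>i. m (Suc i)) e n \<in> convex_hull_subgroup s"
    by (simp add: linear_comb_Suc_case_nat)
  then have "m 0 = 0" using indep by blast
  then have "linear_comb (\<lambda>i. m (Suc i)) (\<lambda>i. e' i - e i) n = 0"
    using v R unfolding small_shift_def by simp
  then show "linear_comb m (case_nat 0 (\<lambda>i. e' i - e i)) (Suc n) = 0"
    by (simp add: linear_comb_Suc_case_nat)
qed

lemma small_shift_extend:
  assumes "small_shift s n e e'" "0 \<le> s"
  shows "\<exists>x'. small_shift s (Suc n) (case_nat x e) (case_nat x' e')"
  using small_shift_extend_dependent[OF assms] small_shift_extend_independent[OF assms(1)] by blast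

lemma sat_iff_small_shift:
  assumes "small_shift s n e e'" "0 \<le> s" "closedn n \<phi>"
  shows "sat (+) (<) e \<phi> \<longleftrightarrow> sat (+) (<) e' \<phi>"
  using assms
proof (induct \<phi> arbitrary: n e e')
  case (Eq t1 t2)
  then have "sat (+) (<) e (Eq t1 t2) \<longleftrightarrow> linear_comb (\<lambda>i. tm_coeff t1 i - tm_coeff t2 i) e n = 0"
    "sat (+) (<) e' (Eq t1 t2) \<longleftrightarrow> linear_comb (\<lambda>i. tm_coeff t1 i - tm_coeff t2 i) e' n = 0"
    by (simp_all add: teval_eq_linear_comb[of n] linear_comb_diff_coeffs)
  then show ?case using small_shift_linear_comb_sign[OF Eq(1,2)] by blast
next
  case (Lt t1 t2)
  then have "sat (+) (<) e (Lt t1 t2) \<longleftrightarrow> linear_comb (\<lambda>i. tm_coeff t1 i - tm_coeff t2 i) e n < 0"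
    "sat (+) (<) e' (Lt t1 t2) \<longleftrightarrow> linear_comb (\<lambda>i. tm_coeff t1 i - tm_coeff t2 i) e' n < 0"
    by (simp_all add: teval_eq_linear_comb[of n] linear_comb_diff_coeffs)
  then show ?case using small_shift_linear_comb_sign[OF Lt(1,2)] by blast
next
  case (Ex \<phi>)
  have forth: "sat (+) (<) e\<^sub>2 (fm.Ex \<phi>)"
    if R: "small_shift s n e\<^sub>1 e\<^sub>2" and ex: "sat (+) (<) e\<^sub>1 (fm.Ex \<phi>)" for e\<^sub>1 e\<^sub>2
  proof -
    obtain x where x: "sat (+) (<) (case_nat x e\<^sub>1) \<phi>" using ex by auto
    obtain x' where "small_shift s (Suc n) (case_nat x e\<^sub>1) (case_nat x' e\<^sub>2)"
      using small_shift_extend[OF R Ex(3)] by blast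
    then have "sat (+) (<) (case_nat x' e\<^sub>2) \<phi>" using Ex(1,3,4) x by auto
    then show ?thesis by auto
  qed
  show ?case using forth[OF Ex(2)] forth[OF small_shift_sym[OF Ex(2,3)]] by blast
qed simp_all

lemma Sigma_rel_mono:
  assumes "Sigma_rel c b'" "zabs b \<le> zabs b'"
  shows "Sigma_rel c b"
  unfolding Sigma_rel_def
proof (intro allI impI)
  fix m :: "int list" and k :: int
  assume m: "length m = length c" "m \<noteq> replicate (length c) 0" and k: "0 < k"
  have "zmul k (max (zabs b) zone) \<le> zmul k (max (zabs b') zone)"
    using assms(2) k by (intro zmul_mono) (auto simp: le_max_iff_disj)
  also have "\<dots> < zabs (lincomb m c)" using assms(1) m k unfolding Sigma_rel_def by blast
  finally show "zmul k (max (zabs b) zone) < zabs (lincomb m c)" .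
qed

text \<open>
  \<open>zabs zone\<close> rather than \<open>zone\<close>: outside a \<open>Z\<close>-group \<open>zone\<close> is an unspecified value.
\<close>

lemma Sigma_rel_add_small:
  fixes c d :: "'z::linordered_ab_group_add list"
  assumes len: "length c = r" "length d = r" and s: "0 \<le> s"
    and ds: "\<forall>i<r. zabs (d ! i) \<le> s"
    and sig: "Sigma_rel c (zabs b + zabs zone + s)"
  shows "Sigma_rel (map2 (+) c d) b"
  unfolding Sigma_rel_def
proof (intro allI impI)
  fix m :: "int list" and k :: int
  assume m: "length m = length (map2 (+) c d)" "m \<noteq> replicate (length (map2 (+) c d)) 0"
    and k: "0 < k"
  define M where "M = max (zabs b) zone"
  define M' where "M' = max (zabs (zabs b + zabs zone + s)) zone"
  define K where "K = (\<Sum>i<r. \<bar>m ! i\<bar>)"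
  define \<delta> where "\<delta> = linear_comb (\<lambda>i. m ! i) (\<lambda>i. d ! i) r"
  have K: "0 \<le> K" unfolding K_def by (intro sum_nonneg) auto
  have M0: "0 \<le> M" unfolding M_def using zabs_nonneg[of b] by (simp add: le_max_iff_disj)
  have "M \<le> zabs b + zabs zone" unfolding M_def
    using zabs_nonneg[of zone] add_increasing[OF zabs_nonneg[of b] zabs_ge_self[of zone]] by simp
  moreover have "zabs (zabs b + zabs zone + s) = zabs b + zabs zone + s"
    using s by (intro zabs_of_nonneg add_nonneg_nonneg zabs_nonneg)
  ultimately have "M + s \<le> M'" unfolding M'_def by (simp add: le_max_iff_disj)
  then have MM': "M \<le> M'" "s \<le> M'"
    using add_increasing2[OF s order_refl, of M] add_increasing[OF M0 order_refl, of s]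
    by (blast intro: order_trans)+
  have lincomb_add: "lincomb m (map2 (+) c d) = lincomb m c + \<delta>"
  proof -
    have "length (map2 (+) c d) = r" using len by simp
    then have "lincomb m (map2 (+) c d) = linear_comb (\<lambda>i. m ! i) (\<lambda>i. c ! i + d ! i) r"
      unfolding lincomb_eq_linear_comb using len by (auto intro: linear_comb_cong)
    then show ?thesis by (simp add: linear_comb_add lincomb_eq_linear_comb len \<delta>_def)
  qed
  have "zmul k M + zmul K s \<le> zmul k M' + zmul K M'"
    using MM' M0 s k K by (intro add_mono zmul_mono) auto
  also have "\<dots> = zmul (k + K) M'" by (simp add: zmul_left_distrib)
  also have "\<dots> < zabs (lincomb m c)"
    using sig m k K len unfolding Sigma_rel_def M'_def by auto
  also have "\<dots> \<le> zabs (lincomb m (map2 (+) c d)) + zabs \<delta>"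
    using zabs_triangle_ineq[of "lincomb m (map2 (+) c d)" "- \<delta>"] lincomb_add by simp
  also have "\<dots> \<le> zabs (lincomb m (map2 (+) c d)) + zmul K s"
    unfolding K_def \<delta>_def using ds by (intro add_left_mono zabs_linear_comb_le) auto
  finally show "zmul k (max (zabs b) zone) < zabs (lincomb m (map2 (+) c d))"
    unfolding M_def by simp
qed

lemma small_shift_of_Sigma_rel:
  fixes c d :: "'z::linordered_ab_group_add list"
  assumes len: "length c = r" "length d = r"
    and dD: "\<forall>i<r. d ! i \<in> divisibles" and ds: "\<forall>i<r. zabs (d ! i) \<le> s"
    and s: "0 \<le> s" and sig: "Sigma_rel c s"
  shows "small_shift s r (\<lambda>i. c ! i) (\<lambda>i. map2 (+) c d ! i)"
proof (rule small_shiftI[where d="\<lambda>i. d ! i"])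
  show "map2 (+) c d ! i - c ! i = d ! i" if "i < r" for i using that len by simp
  show "d ! i \<in> divisibles \<inter> convex_hull_subgroup s" if "i < r" for i
    using that dD ds unfolding convex_hull_subgroup_def by (auto intro: exI[of _ 1])
next
  fix m assume small: "linear_comb m (\<lambda>i. c ! i) r \<in> convex_hull_subgroup s"
  show "linear_comb m (\<lambda>i. d ! i) r = 0"
  proof (cases "\<forall>i<r. m i = 0")
    case True then show ?thesis by (simp add: linear_comb_def)
  next
    case False
    then obtain i where i: "i < r" "m i \<noteq> 0" by blast
    define ml where "ml = map m [0..<r]"
    have "ml ! i \<noteq> 0" using i by (simp add: ml_def)
    then have nonzero: "ml \<noteq> replicate (length c) 0" using i len by auto
    have lin: "lincomb ml c = linear_comb m (\<lambda>i. c ! i) r"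
      unfolding lincomb_eq_linear_comb len by (intro linear_comb_cong) (simp_all add: ml_def)
    obtain K :: nat where K: "zabs (linear_comb m (\<lambda>i. c ! i) r) \<le> zmul (int K) s"
      using small unfolding convex_hull_subgroup_def by blast
    have "zmul (int K) s \<le> zmul (int K + 1) s" using s by (intro zmul_mono_coeff) auto
    also have "\<dots> \<le> zmul (int K + 1) (max (zabs s) zone)"
      by (intro zmul_mono) (auto simp: zabs_of_nonneg[OF s])
    also have "\<dots> < zabs (lincomb ml c)"
      using sig nonzero len unfolding Sigma_rel_def by (simp add: ml_def)
    finally show ?thesis using K lin by simp
  qed
qed

lemma realizations_small_shift:
  assumes "c \<in> realizations r p" "\<forall>\<phi>\<in>p. closedn r \<phi>" "length c' = r"
    and "small_shift s r (\<lambda>i. c ! i) (\<lambda>i. c' ! i)" "0 \<le> s"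
  shows "c' \<in> realizations r p"
  using assms sat_iff_small_shift[OF assms(4,5)] unfolding realizations_def zsat_def by auto

lemma Xset_shift_invariant_eq_zero:
  fixes T :: "'z::linordered_ab_group_add itself" and d :: "'z list"
  assumes p: "p \<in> Xset T r" and inj: "inj_on f (realizations r p \<inter> {a. Sigma_t t a})"
    and d: "d \<in> divisibles_pow r"
    and invariant: "\<forall>c\<in>realizations r p. f (map2 (+) c d) = f c"
  shows "d = replicate r 0"
proof -
  have ld: "length d = r" and dD: "\<forall>i<r. d ! i \<in> divisibles"
    using d unfolding divisibles_pow_def by auto
  define s where "s = (\<Sum>i<r. zabs (d ! i))"
  have s: "0 \<le> s" unfolding s_def by (intro sum_nonneg zabs_nonneg)
  have ds: "\<forall>i<r. zabs (d ! i) \<le> s" unfolding s_def by (auto intro: zabs_le_sum_zabs)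
  \<comment> \<open>\<open>\<Sigma>(x, s)\<close> makes \<open>c + d\<close> realize \<open>p\<close>; the enlarged parameters keep \<open>\<Sigma>\<^sub>t\<close> for \<open>c + d\<close>\<close>
  obtain c where cR: "c \<in> realizations r p"
    and cS: "Sigma_t (s # map (\<lambda>b. zabs b + zabs zone + s) t) c"
    using p unfolding Xset_def by blast
  have lc: "length c = r" using cR unfolding realizations_def by auto
  have sig: "Sigma_rel c (zabs b + zabs zone + s)" if "b \<in> set t" for b
    using cS that unfolding Sigma_t_def by simp
  have "Sigma_t t c" unfolding Sigma_t_def
  proof
    fix b assume "b \<in> set t"
    moreover have "zabs b \<le> zabs (zabs b + zabs zone + s)"
      using s zabs_nonneg[of zone] by (simp add: zabs_of_nonneg add_nonneg_nonneg zabs_nonneg)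
    ultimately show "Sigma_rel c b" using sig Sigma_rel_mono by blast
  qed
  moreover have "Sigma_t t (map2 (+) c d)"
    unfolding Sigma_t_def using Sigma_rel_add_small[OF lc ld s ds] sig by blast
  moreover have "map2 (+) c d \<in> realizations r p"
  proof (rule realizations_small_shift[OF cR])
    show "\<forall>\<phi>\<in>p. closedn r \<phi>" using p by (simp add: Xset_def complete_type_def)
    show "length (map2 (+) c d) = r" using lc ld by simp
    have "Sigma_rel c s" using cS by (simp add: Sigma_t_def)
    then show "small_shift s r (\<lambda>i. c ! i) (\<lambda>i. map2 (+) c d ! i)"
      by (rule small_shift_of_Sigma_rel[OF lc ld dD ds s])
  qed (rule s)
  ultimately have shifted: "map2 (+) c d = c"
    using inj cR invariant by (auto dest: inj_onD)
  have "d ! i = 0" if "i < r" for i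
  proof -
    have "c ! i + d ! i = map2 (+) c d ! i" using that lc ld by simp
    also have "\<dots> = c ! i" by (simp only: shifted)
    finally show ?thesis by simp
  qed
  then show ?thesis using ld by (intro nth_equalityI) auto
qed

lemma divisibles_pow_diff:
  assumes "x \<in> divisibles_pow r" "y \<in> divisibles_pow r"
  shows "map2 (-) x y \<in> divisibles_pow r"
proof -
  have "length x = r" "length y = r" "set x \<subseteq> divisibles" "set y \<subseteq> divisibles"
    using assms unfolding divisibles_pow_def by auto
  then have "length (map2 (-) x y) = r" "\<forall>i<r. map2 (-) x y ! i \<in> divisibles"
    by (auto intro!: divisibles_diff nth_mem)
  then show ?thesis unfolding divisibles_pow_def by (auto simp: in_set_conv_nth)
qed

lemma inj_on_divisibles_pow_if_kernel_trivial:
  assumes G: "group G" and f: "f \<in> divisibles_pow r \<rightarrow> carrier G"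
    and hom: "\<forall>x\<in>divisibles_pow r. \<forall>y\<in>divisibles_pow r. f (map2 (+) x y) = f x \<otimes>\<^bsub>G\<^esub> f y"
    and kernel: "\<forall>d\<in>divisibles_pow r. f d = \<one>\<^bsub>G\<^esub> \<longrightarrow> d = replicate r 0"
  shows "inj_on f (divisibles_pow r)"
proof (rule inj_onI)
  fix x y assume x: "x \<in> divisibles_pow r" and y: "y \<in> divisibles_pow r" and fxy: "f x = f y"
  have lx: "length x = r" and ly: "length y = r" using x y unfolding divisibles_pow_def by auto
  define d where "d = map2 (-) x y"
  have d: "d \<in> divisibles_pow r" unfolding d_def using x y by (rule divisibles_pow_diff)
  have "x = map2 (+) y d" unfolding d_def using lx ly by (intro nth_equalityI) auto
  then have "f y \<otimes>\<^bsub>G\<^esub> f d = f y" using hom y d fxy by simp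
  then have "f d = \<one>\<^bsub>G\<^esub>" using group.l_cancel_one[OF G] f y d by blast
  then have d0: "d = replicate r 0" using kernel d by blast
  have "x ! i = y ! i" if "i < r" for i
  proof -
    have "x ! i - y ! i = d ! i" using that lx ly by (simp add: d_def)
    also have "\<dots> = 0" using that by (simp only: d0 nth_replicate)
    finally show ?thesis by simp
  qed
  then show "x = y" using lx ly by (intro nth_equalityI) auto
qed

theorem mainTheorem7:
  fixes T :: "'z::linordered_ab_group_add itself"
    and r k :: nat
    and G :: "'z list monoid"
    and f :: "'z list \<Rightarrow> 'z list"
  assumes "Zgroup T" and "omega_saturated T"
    and "definable_group k G"
    and "f \<in> divisibles_pow r \<rightarrow> carrier G"
    and "\<forall>x\<in>divisibles_pow r. \<forall>y\<in>divisibles_pow r. f (map2 (+) x y) = f x \<otimes>\<^bsub>G\<^esub> f y"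
    and "type_definable (r + k) {x @ f x | x. x \<in> (divisibles_pow r :: 'z list set)}"
    and "\<exists>(t::'z list) p. p \<in> Xset T r \<and> realizations r p \<subseteq> (divisibles_pow r :: 'z list set) \<and>
           inj_on f (realizations r p \<inter> {a. Sigma_t t a})"
  shows "inj_on f (divisibles_pow r)"
proof -
  have G: "group G" using assms(3) unfolding definable_group_def by blast
  obtain t p where p: "p \<in> Xset T r" and pD: "realizations r p \<subseteq> (divisibles_pow r :: 'z list set)"
    and inj: "inj_on f (realizations r p \<inter> {a. Sigma_t t a})"
    using assms(7) by blast
  have "d = replicate r 0" if d: "d \<in> divisibles_pow r" and kernel: "f d = \<one>\<^bsub>G\<^esub>" for d
  proof (rule Xset_shift_invariant_eq_zero[OF p inj d], intro ballI)
    fix c :: "'z list" assume "c \<in> realizations r p"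
    then have c: "c \<in> divisibles_pow r" using pD by blast
    then have "f (map2 (+) c d) = f c \<otimes>\<^bsub>G\<^esub> \<one>\<^bsub>G\<^esub>" using assms(5) d kernel by simp
    moreover have "f c \<in> carrier G" using assms(4) c by blast
    ultimately show "f (map2 (+) c d) = f c" using group.is_monoid[OF G] by (simp add: monoid.r_one)
  qed
  then show ?thesis using inj_on_divisibles_pow_if_kernel_trivial[OF G assms(4,5)] by blast
qed

end
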